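(* There exists a constant $C$, independent of $\sigma_0$, such that for every $\sigma_0\in(0,1)$, $$|\partial_x\theta^{\sigma_0}(t,x)|\le \frac{C}{\sigma_0^2},\qquad (t,x)\in[0,T)\times\mathbb{R}.$$
   Context: Fix $T>0$, $\kappa\in\mathbb{R}$, $\delta\in(0,T)$. Let $\eta$ solve $\eta_t'=\eta_t^2-2\kappa\eta_t-1$, $\eta_T=1$ on $[0,T]$; set $w_t=\exp(\int_t^T(\eta_s-\kappa)ds)$, $r_t=\int_t^Tw_s^{-2}ds$. Define $g(x)=-x/r_\delta$ if $|x|\le r_\delta$, $g(x)=-\mathrm{sign}(x)$ if $|x|>r_\delta$. For $\sigma_0\in(0,1)$, $\theta^{\sigma_0}$ denotes the unique bounded classical solution (in $C^{1,2}([0,T)\times\mathbb{R})\cap C([0,T]\times\mathbb{R})$) of $$\partial_t\theta-w_t^{-2}\theta\,\partial_x\theta+\tfrac12\sigma_0^2w_t^{-2}\partial^2_{xx}\theta=0\ \text{on }[0,T)\times\mathbb{R},\qquad \theta(T,\cdot)=g.$$ *)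

theory Defs
  imports "HOL-Analysis.Analysis"
begin

definition riccati_sol :: "real \<Rightarrow> real \<Rightarrow> (real \<Rightarrow> real) \<Rightarrow> bool" where
  "riccati_sol T \<kappa> \<eta> \<longleftrightarrow>
     (\<forall>t\<in>{0..T}. (\<eta> has_real_derivative ((\<eta> t)^2 - 2 * \<kappa> * \<eta> t - 1)) (at t within {0..T}))
     \<and> \<eta> T = 1"

definition wfun :: "real \<Rightarrow> real \<Rightarrow> (real \<Rightarrow> real) \<Rightarrow> real \<Rightarrow> real" where
  "wfun T \<kappa> \<eta> t = exp (integral {t..T} (\<lambda>s. \<eta> s - \<kappa>))"

definition rfun :: "real \<Rightarrow> real \<Rightarrow> (real \<Rightarrow> real) \<Rightarrow> real \<Rightarrow> real" where
  "rfun T \<kappa> \<eta> t = integral {t..T} (\<lambda>s. 1 / (wfun T \<kappa> \<eta> s)^2)"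

definition gfun :: "real \<Rightarrow> real \<Rightarrow> (real \<Rightarrow> real) \<Rightarrow> real \<Rightarrow> real \<Rightarrow> real" where
  "gfun T \<kappa> \<eta> \<delta> x =
     (if \<bar>x\<bar> \<le> rfun T \<kappa> \<eta> \<delta> then - x / rfun T \<kappa> \<eta> \<delta> else - sgn x)"

definition classical_sol ::
  "real \<Rightarrow> real \<Rightarrow> (real \<Rightarrow> real) \<Rightarrow> real \<Rightarrow> real \<Rightarrow> (real \<Rightarrow> real \<Rightarrow> real) \<Rightarrow> bool" where
  "classical_sol T \<kappa> \<eta> \<delta> \<sigma>\<^sub>0 \<theta> \<longleftrightarrow>
     (\<exists>\<theta>t \<theta>x \<theta>xx.
        (\<forall>t\<in>{0..<T}. \<forall>x.
            ((\<lambda>s. \<theta> s x) has_real_derivative \<theta>t t x) (at t within {0..<T})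
          \<and> ((\<lambda>y. \<theta> t y) has_real_derivative \<theta>x t x) (at x)
          \<and> ((\<lambda>y. \<theta>x t y) has_real_derivative \<theta>xx t x) (at x)
          \<and> \<theta>t t x - (1 / (wfun T \<kappa> \<eta> t)^2) * \<theta> t x * \<theta>x t x
              + 1/2 * \<sigma>\<^sub>0^2 * (1 / (wfun T \<kappa> \<eta> t)^2) * \<theta>xx t x = 0)
      \<and> continuous_on ({0..<T} \<times> UNIV) (\<lambda>(t,x). \<theta>t t x)
      \<and> continuous_on ({0..<T} \<times> UNIV) (\<lambda>(t,x). \<theta>x t x)
      \<and> continuous_on ({0..<T} \<times> UNIV) (\<lambda>(t,x). \<theta>xx t x))
     \<and> continuous_on ({0..T} \<times> UNIV) (\<lambda>(t,x). \<theta> t x)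
     \<and> (\<exists>B. \<forall>t\<in>{0..T}. \<forall>x. \<bar>\<theta> t x\<bar> \<le> B)
     \<and> (\<forall>x. \<theta> T x = gfun T \<kappa> \<eta> \<delta> x)"

end

theory Submission
  imports Defs
begin

text \<open>
  Let \<open>V\<close> be a potential with \<open>V\<^sub>x = \<theta>\<close>, normalised in time so that \<open>V\<^sub>t = w\<^sup>-\<^sup>2 (\<theta>\<^sup>2 - \<sigma>\<^sub>0\<^sup>2 \<theta>\<^sub>x) / 2\<close>.
  The Hopf--Cole transform \<open>\<Phi> = exp (- V / \<sigma>\<^sub>0\<^sup>2)\<close> turns the viscous Burgers equation into the
  backward heat equation \<open>\<Phi>\<^sub>t + \<sigma>\<^sub>0\<^sup>2 w\<^sup>-\<^sup>2 \<Phi>\<^sub>x\<^sub>x / 2 = 0\<close>, and so does every linear combination of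
  spatial translates of \<open>\<Phi>\<close>. Since \<open>\<Phi>\<close> grows at most exponentially, the maximum principle
  propagates the inequalities
  \<open>\<Phi> (x + h) \<le> e\<^bsup>\<bar>h\<bar>/\<sigma>\<^sub>0\<^sup>2\<^esup> \<Phi> x\<close>, \<open>2 \<Phi> x \<le> \<Phi> (x + h) + \<Phi> (x - h)\<close> and, for \<open>\<bar>h\<bar> \<le> \<sigma>\<^sub>0\<^sup>2\<close>,
  \<open>\<Phi> (x + h) + \<Phi> (x - h) \<le> (2 + K h\<^sup>2) \<Phi> x\<close> with \<open>K = 1 / (r\<^sub>\<delta> \<sigma>\<^sub>0\<^sup>2) + 2 / \<sigma>\<^sub>0\<^sup>4\<close>
  backwards from \<open>t = T\<close>, where they hold because \<open>V (T, \<cdot>)\<close> is an antiderivative of \<open>g\<close>, hence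
  \<open>1\<close>-Lipschitz, concave and with second differences at least \<open>- h\<^sup>2 / r\<^sub>\<delta>\<close>. They yield
  \<open>\<bar>\<theta>\<bar> \<le> 1\<close> and \<open>0 \<le> \<Phi>\<^sub>x\<^sub>x \<le> K \<Phi>\<close>, and as \<open>\<Phi>\<^sub>x\<^sub>x = (\<theta>\<^sup>2 / \<sigma>\<^sub>0\<^sup>4 - \<theta>\<^sub>x / \<sigma>\<^sub>0\<^sup>2) \<Phi>\<close> this gives
  \<open>\<bar>\<theta>\<^sub>x\<bar> \<le> (2 + 1 / r\<^sub>\<delta>) / \<sigma>\<^sub>0\<^sup>2\<close>.
\<close>

lemma exp_le_quadratic:
  fixes y :: real
  assumes "\<bar>y\<bar> \<le> 1"
  shows "exp y \<le> 1 + y + y^2"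
proof (cases "0 \<le> y")
  case True
  then show ?thesis using exp_bound[of y] assms by simp
next
  case False
  then have y: "y < 0" by simp
  have "exp y * (1 - y) \<le> exp y * exp (- y)"
    using exp_ge_add_one_self[of "- y"] by (intro mult_left_mono) auto
  also have "\<dots> = 1" by (simp add: exp_minus)
  also have "1 \<le> (1 + y + y^2) * (1 - y)"
  proof -
    have "0 \<le> - y * y^2" using y by (intro mult_nonneg_nonneg) auto
    then show ?thesis by (simp add: algebra_simps power2_eq_square)
  qed
  finally show ?thesis using y by (simp add: mult_le_cancel_right)
qed

lemma DERIV_comp_affine:
  fixes f :: "real \<Rightarrow> real"
  assumes "(f has_real_derivative d) (at (c + s * y))"
  shows "((\<lambda>y. f (c + s * y)) has_real_derivative s * d) (at y)"
proof -
  have "((\<lambda>y. c + s * y) has_real_derivative s) (at y)"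
    by (auto intro!: derivative_eq_intros)
  from DERIV_chain2[OF assms this] show ?thesis by (simp add: mult.commute)
qed

lemma continuous_on_slice:
  assumes "continuous_on (A \<times> B) (\<lambda>(t, x). f t x)" and "t \<in> A"
  shows "continuous_on B (f t)"
proof -
  have "continuous_on B (\<lambda>x. (\<lambda>(t, x). f t x) (t, x))"
    by (rule continuous_on_compose2[OF assms(1)]) (use assms(2) in \<open>auto intro!: continuous_intros\<close>)
  then show ?thesis by simp
qed

lemma derivative_nonpos_at_right_max:
  fixes f :: "real \<Rightarrow> real"
  assumes "(f has_real_derivative c) (at t within S)" and "0 < \<rho>"
    and "\<And>h. 0 < h \<Longrightarrow> h < \<rho> \<Longrightarrow> t + h \<in> S"
    and "\<And>h. 0 < h \<Longrightarrow> h < \<rho> \<Longrightarrow> f (t + h) \<le> f t"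
  shows "c \<le> 0"
proof (rule ccontr)
  assume "\<not> c \<le> 0"
  then obtain e where e: "e > 0" "\<And>h. h > 0 \<Longrightarrow> t + h \<in> S \<Longrightarrow> h < e \<Longrightarrow> f t < f (t + h)"
    using has_real_derivative_pos_inc_right[OF assms(1)] by force
  define h where "h = min e \<rho> / 2"
  have "0 < h" "h < e" "h < \<rho>" using e assms(2) by (auto simp: h_def)
  then show False using e(2)[of h] assms(3,4)[of h] by fastforce
qed

lemma second_derivative_nonpos_at_local_max:
  fixes f f' :: "real \<Rightarrow> real"
  assumes f': "\<And>y. (f has_real_derivative f' y) (at y)"
    and f'': "(f' has_real_derivative c) (at x)"
    and "0 < \<rho>" and max: "\<And>y. \<bar>y - x\<bar> < \<rho> \<Longrightarrow> f y \<le> f x"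
  shows "c \<le> 0"
proof (rule ccontr)
  assume "\<not> c \<le> 0"
  then obtain d where d: "d > 0" "\<And>h. h > 0 \<Longrightarrow> h < d \<Longrightarrow> f' x < f' (x + h)"
    using DERIV_pos_inc_right[OF f''] by force
  have f'x: "f' x = 0"
    by (rule DERIV_local_max[OF f' \<open>0 < \<rho>\<close>]) (use max in \<open>auto simp: abs_minus_commute\<close>)
  define h where "h = min d \<rho> / 2"
  have h: "0 < h" "h < d" "h < \<rho>" using d \<open>0 < \<rho>\<close> by (auto simp: h_def)
  obtain z where z: "x < z" "z < x + h" "f (x + h) - f x = h * f' z"
    using MVT2[of x "x + h" f f'] h f' by auto
  have "0 < f' z" using d(2)[of "z - x"] z h f'x by simp
  then have "f x < f (x + h)" using z h by (simp add: algebra_simps)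
  then show False using max[of "x + h"] h by simp
qed

text \<open>The function \<open>h \<mapsto> f (x + h) + f (x - h) - 2 f x - c h\<^sup>2\<close> has a local maximum at \<open>0\<close>,
  where its second derivative is \<open>2 (f'' - c)\<close>.\<close>
lemma second_derivative_le_of_second_difference:
  fixes f f' :: "real \<Rightarrow> real"
  assumes f': "\<And>y. (f has_real_derivative f' y) (at y)"
    and f'': "(f' has_real_derivative f'') (at x)"
    and "0 < \<rho>" and diff: "\<And>h. \<bar>h\<bar> < \<rho> \<Longrightarrow> f (x + h) + f (x - h) - 2 * f x \<le> c * h^2"
  shows "f'' \<le> c"
proof -
  define q where "q h = f (x + 1 * h) + f (x + (-1) * h) - 2 * f x - c * (h * h)" for h
  define q' where "q' h = 1 * f' (x + 1 * h) + (-1) * f' (x + (-1) * h) - c * (h + h)" for h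
  have "1 * (1 * f'') + (-1) * ((-1) * f'') - c * (1 + 1) \<le> 0"
  proof (rule second_derivative_nonpos_at_local_max[where f = q and f' = q'])
    show "(q has_real_derivative q' y) (at y)" for y
    proof -
      have "(q has_real_derivative
          1 * f' (x + 1 * y) + (-1) * f' (x + (-1) * y) - 0 - c * (1 * y + 1 * y)) (at y)"
        unfolding q_def[abs_def]
        by (intro DERIV_diff DERIV_add DERIV_comp_affine f' DERIV_const DERIV_cmult DERIV_mult DERIV_ident)
      then show ?thesis by (simp add: q'_def)
    qed
    show "(q' has_real_derivative 1 * (1 * f'') + (-1) * ((-1) * f'') - c * (1 + 1)) (at 0)"
      unfolding q'_def[abs_def]
      by (intro DERIV_diff DERIV_add DERIV_cmult DERIV_comp_affine DERIV_ident) (use f'' in simp_all)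
    show "q y \<le> q 0" if "\<bar>y - 0\<bar> < \<rho>" for y
      using diff[of y] that by (simp add: q_def power2_eq_square)
  qed fact
  then show ?thesis by simp
qed

section \<open>Antiderivatives depending on a parameter\<close>

text \<open>Writing the antiderivative of \<open>f\<close> vanishing at \<open>0\<close> as an integral over the fixed interval
  \<open>[0, 1]\<close> makes continuity and differentiability with respect to a parameter of \<open>f\<close> available
  through \<open>integral_continuous_on_param\<close> and \<open>leibniz_rule_field_derivative\<close>.\<close>
definition primitive :: "(real \<Rightarrow> real) \<Rightarrow> real \<Rightarrow> real" where
  "primitive f x = x * integral {0..1} (\<lambda>s. f (s * x))"

lemma primitive_eq_integral_nonneg:
  assumes "continuous_on UNIV f" and "0 \<le> x"
  shows "primitive f x = integral {0..x} f"
proof (cases "x = 0")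
  case True
  then show ?thesis by (simp add: primitive_def)
next
  case False
  with assms(2) have x: "0 < x" by simp
  have "(f has_integral integral {0..x} f) (cbox 0 x)"
    unfolding box_real(2)
    by (intro integrable_integral integrable_continuous_real continuous_on_subset[OF assms(1)]) auto
  from has_integral_affinity[OF this, of x 0] x
  have "((\<lambda>s. f (x * s)) has_integral integral {0..x} f / x) ((\<lambda>y. y / x) ` {0..x})"
    by simp
  moreover have "(\<lambda>y. y / x) ` {0..x} = {0..1}"
    using x by (auto simp: field_simps image_iff intro: exI[of _ "_ * x"])
  ultimately have "integral {0..1} (\<lambda>s. f (s * x)) = integral {0..x} f / x"
    by (simp add: integral_unique mult.commute)
  then show ?thesis using x by (simp add: primitive_def)
qed

lemma primitive_eq_integral_nonpos:
  assumes "continuous_on UNIV f" and "x \<le> 0"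
  shows "primitive f x = - integral {x..0} f"
proof (cases "x = 0")
  case True
  then show ?thesis by (simp add: primitive_def)
next
  case False
  with assms(2) have x: "x < 0" by simp
  have "(f has_integral integral {x..0} f) (cbox x 0)"
    unfolding box_real(2)
    by (intro integrable_integral integrable_continuous_real continuous_on_subset[OF assms(1)]) auto
  from has_integral_affinity[OF this, of x 0] x
  have "((\<lambda>s. f (x * s)) has_integral - integral {x..0} f / x) ((\<lambda>y. y / x) ` {x..0})"
    by simp
  moreover have "(\<lambda>y. y / x) ` {x..0} = {0..1}"
  proof
    show "{0..1} \<subseteq> (\<lambda>y. y / x) ` {x..0}"
    proof
      fix s :: real
      assume s: "s \<in> {0..1}"
      then have "x \<le> s * x" "s * x \<le> 0"
        using x mult_right_mono_neg[of s 1 x] by (auto simp: mult_nonneg_nonpos)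
      then show "s \<in> (\<lambda>y. y / x) ` {x..0}" using x by (intro image_eqI[of _ _ "s * x"]) auto
    qed
  qed (use x in \<open>auto simp: divide_simps\<close>)
  ultimately have "integral {0..1} (\<lambda>s. f (s * x)) = - integral {x..0} f / x"
    by (simp add: integral_unique mult.commute)
  then show ?thesis using x by (simp add: primitive_def)
qed

lemma primitive_eq_integral_diff:
  assumes "continuous_on UNIV f" and "a \<le> 0" and "a \<le> x"
  shows "primitive f x = integral {a..x} f - integral {a..0} f"
proof -
  have f: "f integrable_on {u..v}" for u v
    using integrable_continuous_real continuous_on_subset[OF assms(1)] by blast
  show ?thesis
  proof (cases "0 \<le> x")
    case True
    then show ?thesis
      using primitive_eq_integral_nonneg[OF assms(1)] Henstock_Kurzweil_Integration.integral_combine[OF assms(2) True f] by simp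
  next
    case False
    then show ?thesis
      using primitive_eq_integral_nonpos[OF assms(1)] Henstock_Kurzweil_Integration.integral_combine[OF assms(3) _ f, of 0] by simp
  qed
qed

lemma has_real_derivative_primitive:
  assumes "continuous_on UNIV f"
  shows "(primitive f has_real_derivative f x) (at x)"
proof -
  define a where "a = - \<bar>x\<bar> - 1"
  define b where "b = \<bar>x\<bar> + 1"
  have ab: "a < x" "x < b" "a \<le> 0" unfolding a_def b_def by linarith+
  have "((\<lambda>y. integral {a..y} f - integral {a..0} f) has_real_derivative f x) (at x within {a..b})"
    using DERIV_diff[OF integral_has_real_derivative[OF continuous_on_subset[OF assms subset_UNIV]]
        DERIV_const] ab by simp
  then have "((\<lambda>y. integral {a..y} f - integral {a..0} f) has_real_derivative f x) (at x)"
    using ab by (simp add: at_within_Icc_at)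
  then show ?thesis
    by (rule has_field_derivative_transform_within_open[of _ _ _ "{a<..<b}"])
      (use ab primitive_eq_integral_diff[OF assms] in auto)
qed

lemma primitive_eq_antiderivative_diff:
  assumes "continuous_on UNIV f" and "\<And>y. (H has_real_derivative f y) (at y)"
  shows "primitive f x = H x - H 0"
proof -
  have "primitive f x - H x = primitive f 0 - H 0"
    by (rule DERIV_isconst_all[of "\<lambda>y. primitive f y - H y"])
      (use DERIV_diff[OF has_real_derivative_primitive[OF assms(1)] assms(2)] in simp)
  then show ?thesis by (simp add: primitive_def)
qed

lemma abs_primitive_le:
  assumes "continuous_on UNIV f" and "\<And>y. \<bar>f y\<bar> \<le> B"
  shows "\<bar>primitive f x\<bar> \<le> B * \<bar>x\<bar>"
proof -
  have "norm (integral {0..1} (\<lambda>s. f (s * x))) \<le> B * (1 - 0)"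
    by (rule integral_bound)
      (use assms in \<open>auto intro!: continuous_on_compose2[OF assms(1)] continuous_intros\<close>)
  then have "\<bar>x\<bar> * \<bar>integral {0..1} (\<lambda>s. f (s * x))\<bar> \<le> \<bar>x\<bar> * B"
    by (intro mult_left_mono) auto
  then show ?thesis by (simp add: primitive_def abs_mult mult.commute)
qed

lemma continuous_on_primitive_param:
  assumes "continuous_on (A \<times> UNIV) (\<lambda>(t, x). f t x)"
  shows "continuous_on (A \<times> UNIV) (\<lambda>(t, x). primitive (f t) x)"
proof -
  have "continuous_on ((A \<times> UNIV) \<times> cbox 0 1)
      (\<lambda>q. (\<lambda>(t, x). f t x) (fst (fst q), snd q * snd (fst q)))"
    by (rule continuous_on_compose2[OF assms]) (auto intro!: continuous_intros)
  then have "continuous_on ((A \<times> UNIV) \<times> cbox 0 1) (\<lambda>(p, s). f (fst p) (s * snd p))"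
    by (simp add: case_prod_beta)
  from integral_continuous_on_param[OF this]
  have "continuous_on (A \<times> UNIV) (\<lambda>p. integral {0..1} (\<lambda>s. f (fst p) (s * snd p)))"
    by simp
  then have "continuous_on (A \<times> UNIV) (\<lambda>p. snd p * integral {0..1} (\<lambda>s. f (fst p) (s * snd p)))"
    by (intro continuous_intros) auto
  then show ?thesis by (simp add: primitive_def case_prod_beta)
qed

lemma has_real_derivative_primitive_param:
  assumes S: "convex S" and t: "t \<in> S"
    and f_t: "\<And>s y. s \<in> S \<Longrightarrow> ((\<lambda>s. f s y) has_real_derivative f_t s y) (at s within S)"
    and f: "\<And>s. s \<in> S \<Longrightarrow> continuous_on UNIV (f s)"
    and cont: "continuous_on (S \<times> UNIV) (\<lambda>(s, y). f_t s y)"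
  shows "((\<lambda>s. primitive (f s) x) has_real_derivative primitive (f_t t) x) (at t within S)"
proof -
  have "continuous_on (S \<times> cbox 0 1) (\<lambda>q. (\<lambda>(s, y). f_t s y) (fst q, snd q * x))"
    by (rule continuous_on_compose2[OF cont]) (auto intro!: continuous_intros)
  then have "((\<lambda>s. integral (cbox 0 1) (\<lambda>u. f s (u * x))) has_real_derivative
      integral (cbox 0 1) (\<lambda>u. f_t t (u * x))) (at t within S)"
    by (intro leibniz_rule_field_derivative[OF _ _ _ t S] f_t integrable_continuous
        continuous_on_compose2[OF f]) (auto intro!: continuous_intros simp: case_prod_beta)
  then show ?thesis unfolding primitive_def by (intro DERIV_cmult) simp
qed

section \<open>A maximum principle for the backward heat equation\<close>

definition backward_heat_solution :: "real \<Rightarrow> (real \<Rightarrow> real) \<Rightarrow> (real \<Rightarrow> real \<Rightarrow> real) \<Rightarrow> bool" where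
  "backward_heat_solution T a D \<longleftrightarrow>
     continuous_on ({0..T} \<times> UNIV) (\<lambda>(t, x). D t x) \<and>
     (\<exists>D_t D_x D_xx. \<forall>t\<in>{0..<T}. \<forall>x.
        ((\<lambda>s. D s x) has_real_derivative D_t t x) (at t within {0..<T}) \<and>
        (D t has_real_derivative D_x t x) (at x) \<and>
        (D_x t has_real_derivative D_xx t x) (at x) \<and>
        D_t t x + a t * D_xx t x = 0)"

lemma backward_heat_solutionI:
  assumes "continuous_on ({0..T} \<times> UNIV) (\<lambda>(t, x). D t x)"
    and "\<And>t x. t \<in> {0..<T} \<Longrightarrow> ((\<lambda>s. D s x) has_real_derivative D_t t x) (at t within {0..<T})"
    and "\<And>t x. t \<in> {0..<T} \<Longrightarrow> (D t has_real_derivative D_x t x) (at x)"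
    and "\<And>t x. t \<in> {0..<T} \<Longrightarrow> (D_x t has_real_derivative D_xx t x) (at x)"
    and "\<And>t x. t \<in> {0..<T} \<Longrightarrow> D_t t x + a t * D_xx t x = 0"
  shows "backward_heat_solution T a D"
  unfolding backward_heat_solution_def using assms by blast

lemma backward_heat_solutionE:
  assumes "backward_heat_solution T a D"
  obtains D_t D_x D_xx where "continuous_on ({0..T} \<times> UNIV) (\<lambda>(t, x). D t x)"
    and "\<And>t x. t \<in> {0..<T} \<Longrightarrow> ((\<lambda>s. D s x) has_real_derivative D_t t x) (at t within {0..<T})"
    and "\<And>t x. t \<in> {0..<T} \<Longrightarrow> (D t has_real_derivative D_x t x) (at x)"
    and "\<And>t x. t \<in> {0..<T} \<Longrightarrow> (D_x t has_real_derivative D_xx t x) (at x)"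
    and "\<And>t x. t \<in> {0..<T} \<Longrightarrow> D_t t x + a t * D_xx t x = 0"
  using assms unfolding backward_heat_solution_def by blast

lemma backward_heat_solution_add:
  assumes "backward_heat_solution T a D" and "backward_heat_solution T a E"
  shows "backward_heat_solution T a (\<lambda>t x. D t x + E t x)"
proof -
  obtain D_t D_x D_xx where "continuous_on ({0..T} \<times> UNIV) (\<lambda>(t, x). D t x)"
    "\<And>t x. t \<in> {0..<T} \<Longrightarrow> ((\<lambda>s. D s x) has_real_derivative D_t t x) (at t within {0..<T})"
    "\<And>t x. t \<in> {0..<T} \<Longrightarrow> (D t has_real_derivative D_x t x) (at x)"
    "\<And>t x. t \<in> {0..<T} \<Longrightarrow> (D_x t has_real_derivative D_xx t x) (at x)"
    "\<And>t x. t \<in> {0..<T} \<Longrightarrow> D_t t x + a t * D_xx t x = 0"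
    using assms(1) by (elim backward_heat_solutionE) blast
  note D = this
  obtain E_t E_x E_xx where "continuous_on ({0..T} \<times> UNIV) (\<lambda>(t, x). E t x)"
    "\<And>t x. t \<in> {0..<T} \<Longrightarrow> ((\<lambda>s. E s x) has_real_derivative E_t t x) (at t within {0..<T})"
    "\<And>t x. t \<in> {0..<T} \<Longrightarrow> (E t has_real_derivative E_x t x) (at x)"
    "\<And>t x. t \<in> {0..<T} \<Longrightarrow> (E_x t has_real_derivative E_xx t x) (at x)"
    "\<And>t x. t \<in> {0..<T} \<Longrightarrow> E_t t x + a t * E_xx t x = 0"
    using assms(2) by (elim backward_heat_solutionE) blast
  note E = this
  show ?thesis
  proof (rule backward_heat_solutionI[where D_t = "\<lambda>t x. D_t t x + E_t t x"
        and D_x = "\<lambda>t x. D_x t x + E_x t x" and D_xx = "\<lambda>t x. D_xx t x + E_xx t x"])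
    show "continuous_on ({0..T} \<times> UNIV) (\<lambda>(t, x). D t x + E t x)"
      using continuous_on_add[OF D(1) E(1)] by (simp add: case_prod_beta)
    show "D_t t x + E_t t x + a t * (D_xx t x + E_xx t x) = 0" if "t \<in> {0..<T}" for t x
      using D(5)[OF that, of x] E(5)[OF that, of x] by (simp add: distrib_left)
  qed (use D E in \<open>auto intro!: DERIV_add\<close>)
qed

lemma backward_heat_solution_cmult:
  assumes "backward_heat_solution T a D"
  shows "backward_heat_solution T a (\<lambda>t x. c * D t x)"
proof -
  obtain D_t D_x D_xx where "continuous_on ({0..T} \<times> UNIV) (\<lambda>(t, x). D t x)"
    "\<And>t x. t \<in> {0..<T} \<Longrightarrow> ((\<lambda>s. D s x) has_real_derivative D_t t x) (at t within {0..<T})"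
    "\<And>t x. t \<in> {0..<T} \<Longrightarrow> (D t has_real_derivative D_x t x) (at x)"
    "\<And>t x. t \<in> {0..<T} \<Longrightarrow> (D_x t has_real_derivative D_xx t x) (at x)"
    "\<And>t x. t \<in> {0..<T} \<Longrightarrow> D_t t x + a t * D_xx t x = 0"
    using assms by (elim backward_heat_solutionE) blast
  note D = this
  show ?thesis
  proof (rule backward_heat_solutionI[where D_t = "\<lambda>t x. c * D_t t x"
        and D_x = "\<lambda>t x. c * D_x t x" and D_xx = "\<lambda>t x. c * D_xx t x"])
    show "continuous_on ({0..T} \<times> UNIV) (\<lambda>(t, x). c * D t x)"
      using continuous_on_mult_left[OF D(1)] by (simp add: case_prod_beta)
    show "c * D_t t x + a t * (c * D_xx t x) = 0" if "t \<in> {0..<T}" for t x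
      using D(5)[OF that, of x] by (metis distrib_left mult.left_commute mult_zero_right)
  qed (use D in \<open>auto intro!: DERIV_cmult\<close>)
qed

lemma backward_heat_solution_shift:
  assumes "backward_heat_solution T a D"
  shows "backward_heat_solution T a (\<lambda>t x. D t (x + h))"
proof -
  obtain D_t D_x D_xx where "continuous_on ({0..T} \<times> UNIV) (\<lambda>(t, x). D t x)"
    "\<And>t x. t \<in> {0..<T} \<Longrightarrow> ((\<lambda>s. D s x) has_real_derivative D_t t x) (at t within {0..<T})"
    "\<And>t x. t \<in> {0..<T} \<Longrightarrow> (D t has_real_derivative D_x t x) (at x)"
    "\<And>t x. t \<in> {0..<T} \<Longrightarrow> (D_x t has_real_derivative D_xx t x) (at x)"
    "\<And>t x. t \<in> {0..<T} \<Longrightarrow> D_t t x + a t * D_xx t x = 0"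
    using assms by (elim backward_heat_solutionE) blast
  note D = this
  show ?thesis
  proof (rule backward_heat_solutionI[where D_t = "\<lambda>t x. D_t t (x + h)"
        and D_x = "\<lambda>t x. D_x t (x + h)" and D_xx = "\<lambda>t x. D_xx t (x + h)"])
    have "continuous_on ({0..T} \<times> UNIV) (\<lambda>p. (\<lambda>(t, x). D t x) (fst p, snd p + h))"
      by (rule continuous_on_compose2[OF D(1)]) (auto intro!: continuous_intros)
    then show "continuous_on ({0..T} \<times> UNIV) (\<lambda>(t, x). D t (x + h))"
      by (simp add: case_prod_beta)
  qed (use D in \<open>auto simp flip: DERIV_shift\<close>)
qed

lemma max_principle_strict:
  fixes E E_t E_x E_xx :: "real \<Rightarrow> real \<Rightarrow> real" and a :: "real \<Rightarrow> real"
  assumes cont: "continuous_on ({0..T} \<times> UNIV) (\<lambda>(t, x). E t x)"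
    and E_t: "\<And>t x. t \<in> {0..<T} \<Longrightarrow> ((\<lambda>s. E s x) has_real_derivative E_t t x) (at t within {0..<T})"
    and E_x: "\<And>t y. t \<in> {0..<T} \<Longrightarrow> (E t has_real_derivative E_x t y) (at y)"
    and E_xx: "\<And>t x. t \<in> {0..<T} \<Longrightarrow> (E_x t has_real_derivative E_xx t x) (at x)"
    and strict: "\<And>t x. t \<in> {0..<T} \<Longrightarrow> 0 < E_t t x + a t * E_xx t x"
    and a: "\<And>t. t \<in> {0..<T} \<Longrightarrow> 0 \<le> a t"
    and terminal: "\<And>x. E T x \<le> 0"
    and far: "\<And>t x. t \<in> {0..T} \<Longrightarrow> R \<le> \<bar>x\<bar> \<Longrightarrow> E t x < 0"
    and t0: "t0 \<in> {0..T}"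
  shows "E t0 x0 \<le> 0"
proof (rule ccontr)
  assume "\<not> E t0 x0 \<le> 0"
  then have pos: "0 < E t0 x0" by simp
  define R' where "R' = max R \<bar>x0\<bar>"
  define S where "S = {0..T} \<times> {-R'..R'}"
  have "(t0, x0) \<in> S" using t0 by (auto simp: S_def R'_def)
  moreover have "continuous_on S (\<lambda>(t, x). E t x)"
    by (rule continuous_on_subset[OF cont]) (auto simp: S_def)
  ultimately obtain tm xm where m: "(tm, xm) \<in> S" and max: "\<And>t x. (t, x) \<in> S \<Longrightarrow> E t x \<le> E tm xm"
    using continuous_attains_sup[of S "\<lambda>(t, x). E t x"] by (force simp: S_def compact_Times)
  have Em: "0 < E tm xm" using max[OF \<open>(t0, x0) \<in> S\<close>] pos by simp
  then have "tm \<noteq> T" using terminal[of xm] by auto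
  with m have tm: "tm \<in> {0..<T}" by (auto simp: S_def)
  have "\<bar>xm\<bar> < R'"
    using m far[of tm xm] Em tm by (force simp: S_def R'_def)
  have "E_xx tm xm \<le> 0"
  proof (rule second_derivative_nonpos_at_local_max[OF E_x[OF tm] E_xx[OF tm]])
    show "0 < R' - \<bar>xm\<bar>" using \<open>\<bar>xm\<bar> < R'\<close> by simp
    show "E tm y \<le> E tm xm" if "\<bar>y - xm\<bar> < R' - \<bar>xm\<bar>" for y
      using that m by (intro max) (auto simp: S_def)
  qed
  moreover have "E_t tm xm \<le> 0"
  proof (rule derivative_nonpos_at_right_max[OF E_t[OF tm]])
    show "0 < T - tm" using tm by simp
    show "tm + h \<in> {0..<T}" if "0 < h" "h < T - tm" for h using that tm by auto
    show "E (tm + h) xm \<le> E tm xm" if "0 < h" "h < T - tm" for h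
      using that m by (intro max) (auto simp: S_def)
  qed
  moreover have "a tm * E_xx tm xm \<le> 0" using a[OF tm] calculation by (simp add: mult_nonneg_nonpos)
  ultimately show False using strict[OF tm, of xm] by linarith
qed

definition heat_barrier :: "real \<Rightarrow> real \<Rightarrow> real \<Rightarrow> real \<Rightarrow> real \<Rightarrow> real" where
  "heat_barrier T L K t x = exp (L * (T - t)) * (exp (K * x) + exp (- (K * x)))"

definition heat_barrier_x :: "real \<Rightarrow> real \<Rightarrow> real \<Rightarrow> real \<Rightarrow> real \<Rightarrow> real" where
  "heat_barrier_x T L K t x = exp (L * (T - t)) * (K * exp (K * x) - K * exp (- (K * x)))"

lemma heat_barrier_pos: "0 < heat_barrier T L K t x"
  by (simp add: heat_barrier_def add_pos_pos)

lemma heat_barrier_dt: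
  "((\<lambda>s. heat_barrier T L K s x) has_real_derivative - L * heat_barrier T L K t x) (at t within X)"
  unfolding heat_barrier_def by (auto intro!: derivative_eq_intros simp: algebra_simps)

lemma heat_barrier_dx: "(heat_barrier T L K t has_real_derivative heat_barrier_x T L K t x) (at x)"
  unfolding heat_barrier_def[abs_def] heat_barrier_x_def by (auto intro!: derivative_eq_intros)

lemma heat_barrier_dxx: "(heat_barrier_x T L K t has_real_derivative K^2 * heat_barrier T L K t x) (at x)"
  unfolding heat_barrier_def heat_barrier_x_def[abs_def]
  by (auto intro!: derivative_eq_intros simp: power2_eq_square algebra_simps)

lemma exp_abs_le_heat_barrier:
  assumes "t \<le> T" and "0 \<le> L"
  shows "exp (K * \<bar>x\<bar>) \<le> heat_barrier T L K t x"
proof -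
  have "exp (K * \<bar>x\<bar>) \<le> exp (K * x) + exp (- (K * x))" by (cases "0 \<le> x") auto
  also have "\<dots> \<le> heat_barrier T L K t x"
    using assms by (simp add: heat_barrier_def add_pos_pos)
  finally show ?thesis .
qed

lemma exp_growth_lt_heat_barrier:
  assumes \<epsilon>: "0 < \<epsilon>" and x: "\<bar>M\<bar> / \<epsilon> \<le> \<bar>x\<bar>" and K: "\<bar>k\<bar> + 1 \<le> K"
    and "t \<le> T" and "0 \<le> L"
  shows "M * exp (k * \<bar>x\<bar>) < \<epsilon> * heat_barrier T L K t x"
proof -
  have "\<bar>M\<bar> \<le> \<epsilon> * \<bar>x\<bar>" using x \<epsilon> by (simp add: divide_le_eq mult.commute)
  also have "\<dots> < \<epsilon> * exp \<bar>x\<bar>"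
    using exp_ge_add_one_self[of "\<bar>x\<bar>"] \<epsilon> by (intro mult_strict_left_mono) linarith+
  finally have M: "\<bar>M\<bar> < \<epsilon> * exp \<bar>x\<bar>" .
  have "M * exp (k * \<bar>x\<bar>) \<le> \<bar>M\<bar> * exp (\<bar>k\<bar> * \<bar>x\<bar>)"
    by (intro mult_mono) (auto simp: mult_right_mono)
  also have "\<dots> < \<epsilon> * exp \<bar>x\<bar> * exp (\<bar>k\<bar> * \<bar>x\<bar>)"
    using M by simp
  also have "\<dots> = \<epsilon> * exp ((\<bar>k\<bar> + 1) * \<bar>x\<bar>)"
    by (simp add: algebra_simps flip: exp_add)
  also have "\<dots> \<le> \<epsilon> * exp (K * \<bar>x\<bar>)"
    using K \<epsilon> by (auto intro!: mult_left_mono mult_right_mono)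
  also have "\<dots> \<le> \<epsilon> * heat_barrier T L K t x"
    using exp_abs_le_heat_barrier[OF assms(4,5)] \<epsilon> by simp
  finally show ?thesis .
qed

text \<open>For \<open>L > A K\<^sup>2\<close> the barrier \<open>B\<close> is a strict supersolution, so \<open>D - \<epsilon> B\<close> is a strict
  subsolution to which \<open>max_principle_strict\<close> applies.\<close>
lemma le_heat_barrier:
  fixes D :: "real \<Rightarrow> real \<Rightarrow> real" and a :: "real \<Rightarrow> real"
  assumes D: "backward_heat_solution T a D"
    and a: "\<And>t. t \<in> {0..<T} \<Longrightarrow> 0 \<le> a t" "\<And>t. t \<in> {0..<T} \<Longrightarrow> a t \<le> A"
    and growth: "\<And>t x. t \<in> {0..T} \<Longrightarrow> D t x \<le> M * exp (k * \<bar>x\<bar>)"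
    and terminal: "\<And>x. D T x \<le> 0"
    and K: "\<bar>k\<bar> + 1 \<le> K" and L: "max A 0 * K^2 < L"
    and s: "s \<in> {0..T}" and \<epsilon>: "0 < \<epsilon>"
  shows "D s y \<le> \<epsilon> * heat_barrier T L K s y"
proof -
  obtain D_t D_x D_xx where
    cont: "continuous_on ({0..T} \<times> UNIV) (\<lambda>(t, x). D t x)" and
    D_t: "\<And>t x. t \<in> {0..<T} \<Longrightarrow> ((\<lambda>s. D s x) has_real_derivative D_t t x) (at t within {0..<T})"
    and D_x: "\<And>t y. t \<in> {0..<T} \<Longrightarrow> (D t has_real_derivative D_x t y) (at y)"
    and D_xx: "\<And>t x. t \<in> {0..<T} \<Longrightarrow> (D_x t has_real_derivative D_xx t x) (at x)"
    and pde: "\<And>t x. t \<in> {0..<T} \<Longrightarrow> D_t t x + a t * D_xx t x = 0"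
    using D by (elim backward_heat_solutionE) blast
  define B where "B = heat_barrier T L K"
  have "D s y - \<epsilon> * B s y \<le> 0"
  proof (rule max_principle_strict[where E = "\<lambda>t x. D t x - \<epsilon> * B t x" and a = a
        and R = "\<bar>M\<bar> / \<epsilon>" and E_t = "\<lambda>t x. D_t t x - \<epsilon> * (- L * B t x)"
        and E_x = "\<lambda>t x. D_x t x - \<epsilon> * heat_barrier_x T L K t x"
        and E_xx = "\<lambda>t x. D_xx t x - \<epsilon> * (K^2 * B t x)"])
    show "continuous_on ({0..T} \<times> UNIV) (\<lambda>(t, x). D t x - \<epsilon> * B t x)"
      using cont unfolding B_def heat_barrier_def case_prod_beta by (intro continuous_intros)
    show "0 < D_t t x - \<epsilon> * (- L * B t x) + a t * (D_xx t x - \<epsilon> * (K^2 * B t x))"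
      if "t \<in> {0..<T}" for t x
    proof -
      have "a t * K^2 \<le> max A 0 * K^2" using a[OF that] by (intro mult_right_mono) auto
      then have "0 < \<epsilon> * B t x * (L - a t * K^2)"
        using \<epsilon> L heat_barrier_pos by (simp add: B_def)
      then show ?thesis using pde[OF that, of x] by (simp add: algebra_simps)
    qed
    show "D T x - \<epsilon> * B T x \<le> 0" for x
      using terminal[of x] mult_pos_pos[OF \<epsilon> heat_barrier_pos[of T L K T x]] by (simp add: B_def)
    show "D t x - \<epsilon> * B t x < 0" if t: "t \<in> {0..T}" and x: "\<bar>M\<bar> / \<epsilon> \<le> \<bar>x\<bar>" for t x
    proof -
      have "0 \<le> max A 0 * K^2" by simp
      then have "0 \<le> L" using L by linarith
      with t show ?thesis
        using exp_growth_lt_heat_barrier[OF \<epsilon> x K, of t T L] growth[OF t, of x] by (simp add: B_def)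
    qed
    show "((\<lambda>s. D s x - \<epsilon> * B s x) has_real_derivative D_t t x - \<epsilon> * (- L * B t x))
        (at t within {0..<T})" if "t \<in> {0..<T}" for t x
      unfolding B_def by (intro DERIV_diff D_t[OF that] DERIV_cmult heat_barrier_dt)
    show "((\<lambda>y. D t y - \<epsilon> * B t y) has_real_derivative D_x t y - \<epsilon> * heat_barrier_x T L K t y) (at y)"
      if "t \<in> {0..<T}" for t y
      unfolding B_def by (intro DERIV_diff D_x[OF that] DERIV_cmult heat_barrier_dx)
    show "((\<lambda>y. D_x t y - \<epsilon> * heat_barrier_x T L K t y) has_real_derivative
        D_xx t x - \<epsilon> * (K^2 * B t x)) (at x)" if "t \<in> {0..<T}" for t x
      unfolding B_def by (intro DERIV_diff D_xx[OF that] DERIV_cmult heat_barrier_dxx)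
  qed (use a s in auto)
  then show ?thesis by (simp add: B_def)
qed

lemma max_principle:
  fixes D :: "real \<Rightarrow> real \<Rightarrow> real" and a :: "real \<Rightarrow> real"
  assumes D: "backward_heat_solution T a D"
    and a: "\<And>t. t \<in> {0..<T} \<Longrightarrow> 0 \<le> a t" "\<And>t. t \<in> {0..<T} \<Longrightarrow> a t \<le> A"
    and growth: "\<And>t x. t \<in> {0..T} \<Longrightarrow> D t x \<le> M * exp (k * \<bar>x\<bar>)"
    and terminal: "\<And>x. D T x \<le> 0"
    and t0: "t0 \<in> {0..T}"
  shows "D t0 x0 \<le> 0"
proof (rule ccontr)
  define K where "K = \<bar>k\<bar> + 1"
  define L where "L = max A 0 * K^2 + 1"
  define B where "B = heat_barrier T L K t0 x0"
  assume "\<not> D t0 x0 \<le> 0"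
  then have "D t0 x0 \<le> D t0 x0 / 2"
    using le_heat_barrier[OF D a growth terminal _ _ t0, where K = K and L = L and y = x0
        and \<epsilon> = "D t0 x0 / (2 * B)"] heat_barrier_pos[of T L K t0 x0]
    by (simp add: B_def K_def L_def)
  with \<open>\<not> D t0 x0 \<le> 0\<close> show False by simp
qed

locale burgers_solution =
  fixes T \<kappa> \<delta> \<sigma> :: real and \<eta> :: "real \<Rightarrow> real"
    and \<theta> \<theta>_t \<theta>_x \<theta>_xx :: "real \<Rightarrow> real \<Rightarrow> real" and Bd :: real
  assumes T: "0 < T" and \<delta>: "0 < \<delta>" "\<delta> < T"
    and riccati: "riccati_sol T \<kappa> \<eta>"
    and \<sigma>: "0 < \<sigma>" "\<sigma> < 1"
    and \<theta>_t: "\<And>t x. t \<in> {0..<T} \<Longrightarrow> ((\<lambda>s. \<theta> s x) has_real_derivative \<theta>_t t x) (at t within {0..<T})"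
    and \<theta>_x: "\<And>t x. t \<in> {0..<T} \<Longrightarrow> (\<theta> t has_real_derivative \<theta>_x t x) (at x)"
    and \<theta>_xx: "\<And>t x. t \<in> {0..<T} \<Longrightarrow> (\<theta>_x t has_real_derivative \<theta>_xx t x) (at x)"
    and burgers: "\<And>t x. t \<in> {0..<T} \<Longrightarrow>
      \<theta>_t t x - (1 / (wfun T \<kappa> \<eta> t)^2) * \<theta> t x * \<theta>_x t x
        + 1/2 * \<sigma>^2 * (1 / (wfun T \<kappa> \<eta> t)^2) * \<theta>_xx t x = 0"
    and \<theta>_t_cont: "continuous_on ({0..<T} \<times> UNIV) (\<lambda>(t, x). \<theta>_t t x)"
    and \<theta>_x_cont: "continuous_on ({0..<T} \<times> UNIV) (\<lambda>(t, x). \<theta>_x t x)"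
    and \<theta>_cont: "continuous_on ({0..T} \<times> UNIV) (\<lambda>(t, x). \<theta> t x)"
    and \<theta>_bounded: "\<And>t x. t \<in> {0..T} \<Longrightarrow> \<bar>\<theta> t x\<bar> \<le> Bd"
    and terminal: "\<And>x. \<theta> T x = gfun T \<kappa> \<eta> \<delta> x"
begin

definition winv2 :: "real \<Rightarrow> real" where
  "winv2 t = 1 / (wfun T \<kappa> \<eta> t)^2"

definition r :: real where
  "r = rfun T \<kappa> \<eta> \<delta>"

lemma \<theta>_t_eq: "t \<in> {0..<T} \<Longrightarrow>
    \<theta>_t t x = winv2 t * \<theta> t x * \<theta>_x t x - 1/2 * \<sigma>^2 * winv2 t * \<theta>_xx t x"
  using burgers[of t x] by (simp add: winv2_def algebra_simps)

lemma winv2_pos: "0 < winv2 t"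
  by (simp add: winv2_def wfun_def)

lemma winv2_cont: "continuous_on {0..T} winv2"
proof -
  have "continuous_on {0..T} \<eta>"
    using riccati unfolding riccati_sol_def continuous_on_eq_continuous_within
    by (auto intro: DERIV_continuous)
  then have "(\<lambda>s. \<eta> s - \<kappa>) integrable_on {0..T}"
    by (intro integrable_continuous_real continuous_intros)
  from indefinite_integral_continuous_1'[OF this]
  have "continuous_on {0..T} (wfun T \<kappa> \<eta>)"
    unfolding wfun_def[abs_def] by (intro continuous_on_compose2[OF continuous_on_exp]) auto
  then show ?thesis
    unfolding winv2_def[abs_def] by (intro continuous_intros) (auto simp: wfun_def)
qed

lemma winv2_bounded: "\<exists>W. \<forall>t\<in>{0..T}. winv2 t \<le> W"
  using continuous_attains_sup[OF compact_Icc _ winv2_cont] T by fastforce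

lemma r_pos: "0 < r"
proof -
  have cont: "continuous_on {\<delta>..T} winv2"
    by (rule continuous_on_subset[OF winv2_cont]) (use \<delta> in auto)
  obtain t0 where "t0 \<in> {\<delta>..T}" and min: "\<And>t. t \<in> {\<delta>..T} \<Longrightarrow> winv2 t0 \<le> winv2 t"
    using continuous_attains_inf[OF compact_Icc _ cont] \<delta> by fastforce
  have "0 < (T - \<delta>) * winv2 t0" using \<delta> winv2_pos by simp
  also have "\<dots> = integral {\<delta>..T} (\<lambda>s. winv2 t0)" using \<delta> by simp
  also have "\<dots> \<le> integral {\<delta>..T} winv2"
    by (intro integral_le integrable_continuous_real cont continuous_intros min) auto
  also have "\<dots> = r"
    by (simp add: r_def rfun_def winv2_def[abs_def])
  finally show ?thesis .
qed

lemma gfun_eq: "gfun T \<kappa> \<eta> \<delta> x = max (-1) (min 1 (- x / r))"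
  using r_pos
  by (auto simp: gfun_def r_def[symmetric] abs_le_iff divide_simps sgn_if max_def min_def)

lemma abs_gfun_le: "\<bar>gfun T \<kappa> \<eta> \<delta> x\<bar> \<le> 1"
  unfolding gfun_eq by auto

lemma gfun_antimono: "x \<le> y \<Longrightarrow> gfun T \<kappa> \<eta> \<delta> y \<le> gfun T \<kappa> \<eta> \<delta> x"
  unfolding gfun_eq using r_pos by (auto simp: divide_right_mono min.coboundedI2 max.coboundedI2)

lemma gfun_diff_le: "x \<le> y \<Longrightarrow> gfun T \<kappa> \<eta> \<delta> x - gfun T \<kappa> \<eta> \<delta> y \<le> (y - x) / r"
proof -
  assume "x \<le> y"
  then have "- y / r \<le> - x / r" using r_pos by (simp add: divide_right_mono)
  then show ?thesis unfolding gfun_eq by (auto simp: max_def min_def diff_divide_distrib)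
qed

lemma Bd_nonneg: "0 \<le> Bd"
  using \<theta>_bounded[of 0 0] T by auto

lemma \<theta>_slice_cont: "t \<in> {0..T} \<Longrightarrow> continuous_on UNIV (\<theta> t)"
  by (rule continuous_on_slice[OF \<theta>_cont])

section \<open>The Hopf--Cole transform\<close>

definition U :: "real \<Rightarrow> real \<Rightarrow> real" where
  "U t x = primitive (\<theta> t) x"

definition F :: "real \<Rightarrow> real \<Rightarrow> real" where
  "F t x = winv2 t * (1/2 * (\<theta> t x)^2 - 1/2 * \<sigma>^2 * \<theta>_x t x)"

definition G :: "real \<Rightarrow> real" where
  "G t = winv2 t * (1/2 * integral {0..1} (\<lambda>y. (\<theta> t y)^2) - 1/2 * \<sigma>^2 * (\<theta> t 1 - \<theta> t 0))"

text \<open>Normalising \<open>U\<close> by its mean over \<open>[0, 1]\<close>, rather than by integrating \<open>F (\<cdot>, 0)\<close> in time,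
  keeps \<open>V\<close> continuous up to \<open>t = T\<close>, where \<open>\<theta>\<^sub>x\<close> is not controlled: the correction has time
  derivative \<open>G\<close>, the mean of \<open>F\<close>, in which \<open>\<theta>\<^sub>x\<close> integrates to \<open>\<theta> t 1 - \<theta> t 0\<close>.\<close>
definition V :: "real \<Rightarrow> real \<Rightarrow> real" where
  "V t x = U t x - integral {0..1} (U t) + integral {0..t} G"

lemma U_dx: "t \<in> {0..T} \<Longrightarrow> (U t has_real_derivative \<theta> t x) (at x)"
  unfolding U_def[abs_def] by (rule has_real_derivative_primitive[OF \<theta>_slice_cont])

lemma U_cont: "continuous_on ({0..T} \<times> UNIV) (\<lambda>(t, x). U t x)"
  unfolding U_def by (rule continuous_on_primitive_param[OF \<theta>_cont])

lemma U_slice_cont: "t \<in> {0..T} \<Longrightarrow> continuous_on S (U t)"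
  using U_dx by (meson DERIV_isCont continuous_at_imp_continuous_on)

lemma abs_U_le: "t \<in> {0..T} \<Longrightarrow> \<bar>U t x\<bar> \<le> Bd * \<bar>x\<bar>"
  unfolding U_def by (intro abs_primitive_le \<theta>_slice_cont \<theta>_bounded)

lemma F_dx: "t \<in> {0..<T} \<Longrightarrow> (F t has_real_derivative \<theta>_t t x) (at x)"
proof -
  assume t: "t \<in> {0..<T}"
  have "((\<lambda>y. (\<theta> t y)^2) has_real_derivative 2 * \<theta> t x * \<theta>_x t x) (at x)"
    using DERIV_power[OF \<theta>_x[OF t], of 2] by (simp add: algebra_simps)
  then have "(F t has_real_derivative
      winv2 t * (1/2 * (2 * \<theta> t x * \<theta>_x t x) - 1/2 * \<sigma>^2 * \<theta>_xx t x)) (at x)"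
    unfolding F_def[abs_def] by (intro DERIV_cmult DERIV_diff \<theta>_xx[OF t])
  moreover have "winv2 t * (1/2 * (2 * \<theta> t x * \<theta>_x t x) - 1/2 * \<sigma>^2 * \<theta>_xx t x) = \<theta>_t t x"
    using \<theta>_t_eq[OF t, of x] by (simp add: algebra_simps)
  ultimately show ?thesis by simp
qed

lemma F_cont: "continuous_on ({0..<T} \<times> UNIV) (\<lambda>(t, x). F t x)"
proof -
  have "continuous_on ({0..<T} \<times> UNIV) (\<lambda>p. \<theta> (fst p) (snd p))"
    by (rule continuous_on_subset[OF \<theta>_cont[unfolded case_prod_beta]]) auto
  moreover have "continuous_on ({0..<T} \<times> UNIV) (\<lambda>p. \<theta>_x (fst p) (snd p))"
    using \<theta>_x_cont by (simp add: case_prod_beta)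
  moreover have "continuous_on ({0..<T} \<times> UNIV) (\<lambda>p. winv2 (fst p))"
    by (rule continuous_on_compose2[OF winv2_cont]) (auto intro!: continuous_intros)
  ultimately show ?thesis
    unfolding F_def case_prod_beta by (intro continuous_intros)
qed

lemma U_dt: "t \<in> {0..<T} \<Longrightarrow> ((\<lambda>s. U s x) has_real_derivative F t x - F t 0) (at t within {0..<T})"
proof -
  assume t: "t \<in> {0..<T}"
  have "((\<lambda>s. U s x) has_real_derivative primitive (\<theta>_t t) x) (at t within {0..<T})"
    unfolding U_def
    by (rule has_real_derivative_primitive_param[OF convex_real_interval(7) t \<theta>_t _ \<theta>_t_cont])
      (auto intro: \<theta>_slice_cont)
  moreover have "primitive (\<theta>_t t) x = F t x - F t 0"
    by (rule primitive_eq_antiderivative_diff[OF continuous_on_slice[OF \<theta>_t_cont t] F_dx[OF t]])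
  ultimately show ?thesis by simp
qed

lemma F_has_integral: "t \<in> {0..<T} \<Longrightarrow> (F t has_integral G t) {0..1}"
proof -
  assume t: "t \<in> {0..<T}"
  have "((\<lambda>y. (\<theta> t y)^2) has_integral integral {0..1} (\<lambda>y. (\<theta> t y)^2)) {0..1}"
    using t by (intro integrable_integral integrable_continuous_real continuous_intros
        continuous_on_subset[OF \<theta>_slice_cont]) auto
  moreover have "(\<theta>_x t has_integral (\<theta> t 1 - \<theta> t 0)) {0..1}"
    by (rule fundamental_theorem_of_calculus)
      (auto simp flip: has_real_derivative_iff_has_vector_derivative
        intro: has_field_derivative_at_within \<theta>_x[OF t])
  ultimately show ?thesis
    unfolding F_def[abs_def] G_def by (intro has_integral_mult_right has_integral_diff has_integral_cmul)
qed

lemma G_cont: "continuous_on {0..T} G"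
proof -
  have "continuous_on ({0..T} \<times> cbox 0 1) (\<lambda>p. \<theta> (fst p) (snd p))"
    by (rule continuous_on_subset[OF \<theta>_cont[unfolded case_prod_beta]]) auto
  then have "continuous_on ({0..T} \<times> cbox 0 1) (\<lambda>(t, y). (\<theta> t y)^2)"
    unfolding case_prod_beta by (intro continuous_intros)
  from integral_continuous_on_param[OF this]
  have "continuous_on {0..T} (\<lambda>t. integral {0..1} (\<lambda>y. (\<theta> t y)^2))" by simp
  moreover have "continuous_on {0..T} (\<lambda>t. \<theta> t y)" for y
  proof -
    have "continuous_on {0..T} (\<lambda>t. (\<lambda>(t, x). \<theta> t x) (t, y))"
      by (rule continuous_on_compose2[OF \<theta>_cont]) (auto intro!: continuous_intros)
    then show ?thesis by simp
  qed
  ultimately show ?thesis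
    unfolding G_def[abs_def] by (intro continuous_intros winv2_cont)
qed

lemma mean_U_cont: "continuous_on {0..T} (\<lambda>t. integral {0..1} (U t))"
proof -
  have "continuous_on ({0..T} \<times> cbox 0 1) (\<lambda>(t, y). U t y)"
    by (rule continuous_on_subset[OF U_cont]) auto
  from integral_continuous_on_param[OF this] show ?thesis by simp
qed

lemma mean_U_dt: "t \<in> {0..<T} \<Longrightarrow>
    ((\<lambda>s. integral {0..1} (U s)) has_real_derivative G t - F t 0) (at t within {0..<T})"
proof -
  assume t: "t \<in> {0..<T}"
  have "continuous_on ({0..<T} \<times> cbox 0 1) (\<lambda>p. (\<lambda>(t, x). F t x) p)"
    by (rule continuous_on_subset[OF F_cont]) auto
  moreover have "continuous_on ({0..<T} \<times> cbox 0 1) (\<lambda>p. (\<lambda>(t, x). F t x) (fst p, 0))"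
    by (rule continuous_on_compose2[OF F_cont]) (auto intro!: continuous_intros)
  then have "continuous_on ({0..<T} \<times> cbox 0 1) (\<lambda>p. F (fst p) 0)" by simp
  ultimately have "continuous_on ({0..<T} \<times> cbox 0 1) (\<lambda>(s, y). F s y - F s 0)"
    unfolding case_prod_beta by (intro continuous_intros)
  then have "((\<lambda>s. integral (cbox 0 1) (U s)) has_real_derivative
      integral (cbox 0 1) (\<lambda>y. F t y - F t 0)) (at t within {0..<T})"
    by (intro leibniz_rule_field_derivative[OF U_dt _ _ t] integrable_continuous U_slice_cont)
      (auto simp: convex_real_interval)
  moreover have "integral {0..1} (\<lambda>y. F t y - F t 0) = G t - F t 0"
    using has_integral_diff[OF F_has_integral[OF t] has_integral_const_real[of "F t 0" 0 1]]
    by (simp add: integral_unique)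
  ultimately show ?thesis by simp
qed

lemma integral_G_dt: "t \<in> {0..T} \<Longrightarrow> ((\<lambda>s. integral {0..s} G) has_real_derivative G t) (at t within {0..T})"
  by (rule integral_has_real_derivative[OF G_cont])

lemma integral_G_cont: "continuous_on {0..T} (\<lambda>t. integral {0..t} G)"
  unfolding continuous_on_eq_continuous_within by (blast intro: DERIV_continuous integral_G_dt)

lemma V_cont: "continuous_on ({0..T} \<times> UNIV) (\<lambda>(t, x). V t x)"
proof -
  have "continuous_on ({0..T} \<times> UNIV) (\<lambda>p. integral {0..1} (U (fst p)))"
    by (rule continuous_on_compose2[OF mean_U_cont]) (auto intro!: continuous_intros)
  moreover have "continuous_on ({0..T} \<times> UNIV) (\<lambda>p. integral {0..fst p} G)"
    by (rule continuous_on_compose2[OF integral_G_cont]) (auto intro!: continuous_intros)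
  ultimately show ?thesis
    using U_cont unfolding V_def case_prod_beta by (intro continuous_on_add continuous_on_diff)
qed

lemma V_dt: "t \<in> {0..<T} \<Longrightarrow> ((\<lambda>s. V s x) has_real_derivative F t x) (at t within {0..<T})"
proof -
  assume t: "t \<in> {0..<T}"
  have "((\<lambda>s. integral {0..s} G) has_real_derivative G t) (at t within {0..<T})"
    using t by (intro has_field_derivative_subset[OF integral_G_dt]) auto
  from DERIV_add[OF DERIV_diff[OF U_dt[OF t] mean_U_dt[OF t]] this]
  show ?thesis by (simp add: V_def)
qed

lemma V_dx: "t \<in> {0..T} \<Longrightarrow> (V t has_real_derivative \<theta> t x) (at x)"
  unfolding V_def[abs_def] using DERIV_add[OF DERIV_diff[OF U_dx DERIV_const] DERIV_const] by simp

lemma V_lower_bound: "\<exists>C. \<forall>t\<in>{0..T}. \<forall>x. - V t x \<le> Bd * \<bar>x\<bar> + C"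
proof -
  have "bounded ((\<lambda>t. integral {0..1} (U t) - integral {0..t} G) ` {0..T})"
    by (intro compact_imp_bounded compact_continuous_image continuous_on_diff
        mean_U_cont integral_G_cont compact_Icc)
  then obtain C where C: "\<forall>t\<in>{0..T}. \<bar>integral {0..1} (U t) - integral {0..t} G\<bar> \<le> C"
    unfolding bounded_iff by auto
  have "- V t x \<le> Bd * \<bar>x\<bar> + C" if "t \<in> {0..T}" for t x
  proof -
    have "- U t x \<le> Bd * \<bar>x\<bar>" using abs_U_le[OF that, of x] by linarith
    moreover have "integral {0..1} (U t) - integral {0..t} G \<le> C" using C that by fastforce
    ultimately show ?thesis unfolding V_def by linarith
  qed
  then show ?thesis by (intro exI[of _ C] ballI allI)
qed

definition \<Phi> :: "real \<Rightarrow> real \<Rightarrow> real" where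
  "\<Phi> t x = exp (- V t x / \<sigma>^2)"

definition \<Phi>_x :: "real \<Rightarrow> real \<Rightarrow> real" where
  "\<Phi>_x t x = - \<theta> t x / \<sigma>^2 * \<Phi> t x"

definition \<Phi>_xx :: "real \<Rightarrow> real \<Rightarrow> real" where
  "\<Phi>_xx t x = ((\<theta> t x)^2 / \<sigma>^4 - \<theta>_x t x / \<sigma>^2) * \<Phi> t x"

definition a :: "real \<Rightarrow> real" where
  "a t = 1/2 * \<sigma>^2 * winv2 t"

lemma Phi_pos: "0 < \<Phi> t x"
  by (simp add: \<Phi>_def)

lemma Phi_dx: "t \<in> {0..T} \<Longrightarrow> (\<Phi> t has_real_derivative \<Phi>_x t x) (at x)"
  unfolding \<Phi>_def[abs_def] \<Phi>_x_def
  by (rule DERIV_chain2[OF DERIV_exp DERIV_cdivide[OF DERIV_minus[OF V_dx]], THEN DERIV_cong])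
    (simp_all add: mult.commute)

lemma Phi_dxx: "t \<in> {0..<T} \<Longrightarrow> (\<Phi>_x t has_real_derivative \<Phi>_xx t x) (at x)"
proof -
  assume t: "t \<in> {0..<T}"
  have "((\<lambda>y. - \<theta> t y / \<sigma>^2) has_real_derivative - \<theta>_x t x / \<sigma>^2) (at x)"
    by (intro DERIV_cdivide DERIV_minus \<theta>_x[OF t])
  from DERIV_mult[OF this Phi_dx] t
  have "(\<Phi>_x t has_real_derivative - \<theta>_x t x / \<sigma>^2 * \<Phi> t x + \<Phi>_x t x * (- \<theta> t x / \<sigma>^2)) (at x)"
    by (simp add: \<Phi>_x_def[abs_def])
  moreover have "- \<theta>_x t x / \<sigma>^2 * \<Phi> t x + \<Phi>_x t x * (- \<theta> t x / \<sigma>^2) = \<Phi>_xx t x"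
    using \<sigma> by (simp add: \<Phi>_x_def \<Phi>_xx_def field_simps power2_eq_square power4_eq_xxxx)
  ultimately show ?thesis by simp
qed

lemma backward_heat_solution_Phi: "backward_heat_solution T a \<Phi>"
proof (rule backward_heat_solutionI[where D_t = "\<lambda>t x. - F t x / \<sigma>^2 * \<Phi> t x" and D_x = \<Phi>_x
      and D_xx = \<Phi>_xx])
  show "continuous_on ({0..T} \<times> UNIV) (\<lambda>(t, x). \<Phi> t x)"
    using V_cont \<sigma> unfolding \<Phi>_def[abs_def] case_prod_beta by (intro continuous_intros) auto
  show "((\<lambda>s. \<Phi> s x) has_real_derivative - F t x / \<sigma>^2 * \<Phi> t x) (at t within {0..<T})"
    if "t \<in> {0..<T}" for t x
    unfolding \<Phi>_def
    by (rule DERIV_chain2[OF DERIV_exp DERIV_cdivide[OF DERIV_minus[OF V_dt[OF that]]], THEN DERIV_cong])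
      (simp_all add: mult.commute)
  show "- F t x / \<sigma>^2 * \<Phi> t x + a t * \<Phi>_xx t x = 0" for t x
    using \<sigma> by (simp add: F_def a_def \<Phi>_xx_def field_simps power2_eq_square power4_eq_xxxx)
qed (auto intro: Phi_dx Phi_dxx)

lemma Phi_shift_growth: "\<exists>M. \<forall>t\<in>{0..T}. \<forall>x. \<Phi> t (x + s) \<le> M * exp (Bd / \<sigma>^2 * \<bar>x\<bar>)"
proof -
  obtain C where C: "\<And>t x. t \<in> {0..T} \<Longrightarrow> - V t x \<le> Bd * \<bar>x\<bar> + C"
    using V_lower_bound by blast
  have "\<Phi> t (x + s) \<le> exp ((Bd * \<bar>s\<bar> + C) / \<sigma>^2) * exp (Bd / \<sigma>^2 * \<bar>x\<bar>)"
    if "t \<in> {0..T}" for t x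
  proof -
    have "- V t (x + s) \<le> Bd * \<bar>x\<bar> + Bd * \<bar>s\<bar> + C"
      using C[OF that, of "x + s"] Bd_nonneg abs_triangle_ineq[of x s]
      by (smt (verit) distrib_left mult_left_mono)
    from divide_right_mono[OF this, of "\<sigma>^2"]
    have "- V t (x + s) / \<sigma>^2 \<le> (Bd * \<bar>s\<bar> + C) / \<sigma>^2 + Bd / \<sigma>^2 * \<bar>x\<bar>"
      by (simp add: add_divide_distrib algebra_simps)
    then show ?thesis by (simp add: \<Phi>_def flip: exp_add)
  qed
  then show ?thesis by blast
qed

lemma Phi_combination_nonpos:
  assumes terminal: "\<And>x. c1 * \<Phi> T (x + h) + c2 * \<Phi> T (x - h) + c3 * \<Phi> T x \<le> 0"
    and t: "t \<in> {0..T}"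
  shows "c1 * \<Phi> t (x + h) + c2 * \<Phi> t (x - h) + c3 * \<Phi> t x \<le> 0"
proof -
  define D where "D t x = c1 * \<Phi> t (x + h) + c2 * \<Phi> t (x + - h) + c3 * \<Phi> t (x + 0)" for t x
  have "backward_heat_solution T a D"
    unfolding D_def
    by (intro backward_heat_solution_add backward_heat_solution_cmult backward_heat_solution_shift
        backward_heat_solution_Phi)
  obtain M1 M2 M3 where
    M1: "\<And>t x. t \<in> {0..T} \<Longrightarrow> \<Phi> t (x + h) \<le> M1 * exp (Bd / \<sigma>^2 * \<bar>x\<bar>)" and
    M2: "\<And>t x. t \<in> {0..T} \<Longrightarrow> \<Phi> t (x + - h) \<le> M2 * exp (Bd / \<sigma>^2 * \<bar>x\<bar>)" and
    M3: "\<And>t x. t \<in> {0..T} \<Longrightarrow> \<Phi> t (x + 0) \<le> M3 * exp (Bd / \<sigma>^2 * \<bar>x\<bar>)"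
    using Phi_shift_growth[of h] Phi_shift_growth[of "- h"] Phi_shift_growth[of 0] by meson
  have scaled: "c * \<Phi> s y \<le> \<bar>c\<bar> * (M * e)" if "\<Phi> s y \<le> M * e" for c s y M e
    using that Phi_pos[of s y] abs_ge_self[of c]
    by (smt (verit, best) mult_left_mono mult_right_mono)
  obtain W where W: "\<And>t. t \<in> {0..T} \<Longrightarrow> winv2 t \<le> W" using winv2_bounded by blast
  have "D t x \<le> 0"
  proof (rule max_principle[OF \<open>backward_heat_solution T a D\<close>, where A = "1/2 * \<sigma>^2 * W"
        and M = "\<bar>c1\<bar> * M1 + \<bar>c2\<bar> * M2 + \<bar>c3\<bar> * M3" and k = "Bd / \<sigma>^2"])
    show "0 \<le> a t" for t using winv2_pos[of t] by (simp add: a_def)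
    show "a t \<le> 1/2 * \<sigma>^2 * W" if "t \<in> {0..<T}" for t
      using W[of t] that by (auto simp: a_def intro!: mult_left_mono)
    show "D t x \<le> (\<bar>c1\<bar> * M1 + \<bar>c2\<bar> * M2 + \<bar>c3\<bar> * M3) * exp (Bd / \<sigma>^2 * \<bar>x\<bar>)"
      if "t \<in> {0..T}" for t x
      using add_mono[OF add_mono[OF scaled[OF M1[OF that, of x], of c1] scaled[OF M2[OF that, of x], of c2]]
          scaled[OF M3[OF that, of x], of c3]]
      unfolding D_def by (simp add: algebra_simps)
    show "D T x \<le> 0" for x using terminal[of x] by (simp add: D_def)
  qed (use t in auto)
  then show ?thesis by (simp add: D_def)
qed

section \<open>Estimates propagated from the terminal time\<close>

lemma U_T_dx: "(U T has_real_derivative gfun T \<kappa> \<eta> \<delta> x) (at x)"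
  using U_dx[of T x] T by (simp add: terminal)

lemma U_T_lipschitz: "\<bar>U T x - U T y\<bar> \<le> \<bar>x - y\<bar>"
  using field_differentiable_bound[of UNIV "U T" "gfun T \<kappa> \<eta> \<delta>" 1 x y] U_T_dx abs_gfun_le
  by simp

lemma U_T_second_difference_nonneg:
  assumes h: "0 \<le> h"
  shows "U T (x + h) + U T (x - h) - 2 * U T x \<le> 0"
    and "- (h^2 / r) \<le> U T (x + h) + U T (x - h) - 2 * U T x"
proof -
  define \<phi> where "\<phi> s = U T (x + 1 * s) + U T (x + (-1) * s) - 2 * U T x" for s
  define g where "g = gfun T \<kappa> \<eta> \<delta>"
  have \<phi>': "(\<phi> has_real_derivative g (x + s) - g (x - s)) (at s)" for s
  proof -
    have "(\<phi> has_real_derivative 1 * g (x + 1 * s) + (-1) * g (x + (-1) * s) - 0) (at s)"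
      unfolding \<phi>_def[abs_def] g_def by (intro DERIV_diff DERIV_add DERIV_comp_affine U_T_dx DERIV_const)
    then show ?thesis by simp
  qed
  have "\<phi> h \<le> \<phi> 0"
    by (rule deriv_nonpos_imp_antimono[OF \<phi>' _ h]) (auto simp: g_def intro: gfun_antimono)
  then show "U T (x + h) + U T (x - h) - 2 * U T x \<le> 0" by (simp add: \<phi>_def)
  have "\<phi> 0 + 0^2 / r \<le> \<phi> h + h^2 / r"
  proof (rule DERIV_nonneg_imp_nondecreasing[OF h, of "\<lambda>s. \<phi> s + s^2 / r"])
    fix s assume s: "0 \<le> s" "s \<le> h"
    have "((\<lambda>s. \<phi> s + s^2 / r) has_real_derivative g (x + s) - g (x - s) + 2 * s / r) (at s)"
      using DERIV_add[OF \<phi>' DERIV_cdivide[OF DERIV_power[OF DERIV_ident, of 2 s], of r]] by simp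
    moreover have "0 \<le> g (x + s) - g (x - s) + 2 * s / r"
      using gfun_diff_le[of "x - s" "x + s"] s by (simp add: g_def)
    ultimately show "\<exists>y. ((\<lambda>s. \<phi> s + s^2 / r) has_real_derivative y) (at s) \<and> 0 \<le> y" by blast
  qed
  then show "- (h^2 / r) \<le> U T (x + h) + U T (x - h) - 2 * U T x" by (simp add: \<phi>_def)
qed

lemma U_T_second_difference:
  "U T (x + h) + U T (x - h) - 2 * U T x \<le> 0"
  "- (h^2 / r) \<le> U T (x + h) + U T (x - h) - 2 * U T x"
  using U_T_second_difference_nonneg[of h x] U_T_second_difference_nonneg[of "- h" x]
  by (cases "0 \<le> h"; simp add: algebra_simps)+

lemma Phi_T_shift: "\<Phi> T (x + h) = \<Phi> T x * exp (- ((U T (x + h) - U T x) / \<sigma>^2))"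
  by (simp add: \<Phi>_def V_def diff_divide_distrib add_divide_distrib flip: exp_add)

lemma Phi_shift_le: "t \<in> {0..T} \<Longrightarrow> \<Phi> t (x + h) \<le> exp (\<bar>h\<bar> / \<sigma>^2) * \<Phi> t x"
proof -
  have "\<Phi> T (x + h) \<le> exp (\<bar>h\<bar> / \<sigma>^2) * \<Phi> T x" for x
  proof -
    have "- ((U T (x + h) - U T x) / \<sigma>^2) \<le> \<bar>h\<bar> / \<sigma>^2"
      using divide_right_mono[of "U T x - U T (x + h)" "\<bar>h\<bar>" "\<sigma>^2"] U_T_lipschitz[of x "x + h"]
      by (simp add: diff_divide_distrib)
    then show ?thesis using Phi_pos[of T x] by (simp add: Phi_T_shift mult.commute)
  qed
  moreover assume "t \<in> {0..T}"
  ultimately show ?thesis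
    using Phi_combination_nonpos[of 1 h 0 "- exp (\<bar>h\<bar> / \<sigma>^2)" t x] by simp
qed

lemma Phi_T_second_difference:
  "\<Phi> T (x + h) + \<Phi> T (x - h) =
    \<Phi> T x * (exp (- ((U T (x + h) - U T x) / \<sigma>^2)) + exp (- ((U T (x - h) - U T x) / \<sigma>^2)))"
  using Phi_T_shift[of x h] Phi_T_shift[of x "- h"] by (simp add: distrib_left)

lemma Phi_midpoint_convex: "t \<in> {0..T} \<Longrightarrow> 2 * \<Phi> t x \<le> \<Phi> t (x + h) + \<Phi> t (x - h)"
proof -
  assume t: "t \<in> {0..T}"
  have terminal: "2 * \<Phi> T x \<le> \<Phi> T (x + h) + \<Phi> T (x - h)" for x
  proof -
    define p where "p = (U T (x + h) - U T x) / \<sigma>^2"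
    define q where "q = (U T (x - h) - U T x) / \<sigma>^2"
    have "p + q \<le> 0"
      using U_T_second_difference(1)[of x h] \<sigma>
      by (simp add: p_def q_def add_divide_distrib[symmetric] divide_nonpos_pos algebra_simps)
    then have "2 \<le> exp (- p) + exp (- q)"
      using exp_ge_add_one_self[of "- p"] exp_ge_add_one_self[of "- q"] by linarith
    then show ?thesis
      using Phi_pos[of T x] by (simp add: Phi_T_second_difference flip: p_def q_def)
  qed
  have "(- 1) * \<Phi> t (x + h) + (- 1) * \<Phi> t (x - h) + 2 * \<Phi> t x \<le> 0"
  proof (rule Phi_combination_nonpos[OF _ t])
    show "(- 1) * \<Phi> T (y + h) + (- 1) * \<Phi> T (y - h) + 2 * \<Phi> T y \<le> 0" for y
      using terminal[of y] by linarith
  qed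
  then show ?thesis by linarith
qed

text \<open>Second order Taylor bounds for \<open>exp\<close>, valid since \<open>U T\<close> is \<open>1\<close>-Lipschitz and
  \<open>\<bar>h\<bar> \<le> \<sigma>\<^sup>2\<close>, combined with the lower bound on the second difference of \<open>U T\<close>.\<close>
lemma Phi_second_difference_le:
  assumes "t \<in> {0..T}" and "\<bar>h\<bar> \<le> \<sigma>^2"
  shows "\<Phi> t (x + h) + \<Phi> t (x - h) \<le> (2 + (1 / (r * \<sigma>^2) + 2 / \<sigma>^4) * h^2) * \<Phi> t x"
proof -
  have s2: "0 < \<sigma>^2" using \<sigma> by simp
  define K where "K = 1 / (r * \<sigma>^2) + 2 / \<sigma>^4"
  have terminal: "\<Phi> T (x + h) + \<Phi> T (x - h) \<le> (2 + K * h^2) * \<Phi> T x" for x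
  proof -
    define p where "p = (U T (x + h) - U T x) / \<sigma>^2"
    define q where "q = (U T (x - h) - U T x) / \<sigma>^2"
    have pq: "- (h^2 / (r * \<sigma>^2)) \<le> p + q"
      using divide_right_mono[OF U_T_second_difference(2)[of h x] less_imp_le[OF s2]]
      by (simp add: p_def q_def add_divide_distrib[symmetric] algebra_simps)
    have "\<bar>p\<bar> \<le> \<bar>h\<bar> / \<sigma>^2" "\<bar>q\<bar> \<le> \<bar>h\<bar> / \<sigma>^2"
      using U_T_lipschitz[of "x + h" x] U_T_lipschitz[of "x - h" x] s2
      by (simp_all add: p_def q_def abs_divide divide_right_mono)
    moreover have "\<bar>h\<bar> / \<sigma>^2 \<le> 1" using assms(2) s2 by simp
    ultimately have "exp (- p) \<le> 1 - p + p^2" "exp (- q) \<le> 1 - q + q^2"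
      "p^2 \<le> h^2 / \<sigma>^4" "q^2 \<le> h^2 / \<sigma>^4"
      using exp_le_quadratic[of "- p"] exp_le_quadratic[of "- q"]
        power_mono[of "\<bar>p\<bar>" "\<bar>h\<bar> / \<sigma>^2" 2] power_mono[of "\<bar>q\<bar>" "\<bar>h\<bar> / \<sigma>^2" 2]
      by (simp_all add: power_divide flip: power_mult)
    then have "exp (- p) + exp (- q) \<le> 2 + K * h^2"
      using pq by (simp add: K_def algebra_simps)
    then show ?thesis
      using Phi_pos[of T x] by (simp add: Phi_T_second_difference mult.commute flip: p_def q_def)
  qed
  have "1 * \<Phi> t (x + h) + 1 * \<Phi> t (x - h) + (- (2 + K * h^2)) * \<Phi> t x \<le> 0"
  proof (rule Phi_combination_nonpos[OF _ assms(1)])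
    show "1 * \<Phi> T (y + h) + 1 * \<Phi> T (y - h) + (- (2 + K * h^2)) * \<Phi> T y \<le> 0" for y
      using terminal[of y] by linarith
  qed
  then have "\<Phi> t (x + h) + \<Phi> t (x - h) \<le> (2 + K * h^2) * \<Phi> t x"
    by (simp only: mult_minus_left mult_1)
  then show ?thesis by (simp only: K_def)
qed

lemma abs_theta_le_1: "t \<in> {0..T} \<Longrightarrow> \<bar>\<theta> t x\<bar> \<le> 1"
proof -
  assume t: "t \<in> {0..T}"
  have s2: "0 < \<sigma>^2" using \<sigma> by simp
  have "- 1 \<le> s * \<theta> t x" if s: "\<bar>s\<bar> = 1" for s
  proof -
    have "((\<lambda>h. \<Phi> t (x + s * h) - \<Phi> t x * exp (h / \<sigma>^2)) has_real_derivative
        s * \<Phi>_x t (x + s * 0) - \<Phi> t x * (exp (0 / \<sigma>^2) * (1 / \<sigma>^2))) (at 0)"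
      by (intro DERIV_diff DERIV_comp_affine Phi_dx[OF t] DERIV_cmult DERIV_chain2[OF DERIV_exp]
          DERIV_cdivide[OF DERIV_ident, simplified])
    then have "s * \<Phi>_x t (x + s * 0) - \<Phi> t x * (exp (0 / \<sigma>^2) * (1 / \<sigma>^2)) \<le> 0"
    proof (rule derivative_nonpos_at_right_max[where \<rho> = 1])
      show "\<Phi> t (x + s * (0 + h)) - \<Phi> t x * exp ((0 + h) / \<sigma>^2)
          \<le> \<Phi> t (x + s * 0) - \<Phi> t x * exp (0 / \<sigma>^2)" if "0 < h" for h
        using Phi_shift_le[OF t, of x "s * h"] that s by (simp add: abs_mult mult.commute)
    qed auto
    moreover have "s * \<Phi>_x t (x + s * 0) - \<Phi> t x * (exp (0 / \<sigma>^2) * (1 / \<sigma>^2))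
        = (- s * \<theta> t x - 1) * (\<Phi> t x / \<sigma>^2)"
      using s2 by (simp add: \<Phi>_x_def field_simps)
    ultimately have "(- s * \<theta> t x - 1) * (\<Phi> t x / \<sigma>^2) \<le> 0" by simp
    moreover have "0 < \<Phi> t x / \<sigma>^2" using Phi_pos[of t x] s2 by simp
    ultimately have "- s * \<theta> t x - 1 \<le> 0" by (simp add: mult_le_0_iff del: times_divide_eq_right)
    then show ?thesis by simp
  qed
  from this[of 1] this[of "- 1"] show ?thesis by simp
qed

lemma Phi_xx_nonneg: "t \<in> {0..<T} \<Longrightarrow> 0 \<le> \<Phi>_xx t x"
proof -
  assume t: "t \<in> {0..<T}"
  have "- \<Phi>_xx t x \<le> 0"
  proof (rule second_derivative_le_of_second_difference[where \<rho> = 1])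
    show "((\<lambda>y. - \<Phi> t y) has_real_derivative - \<Phi>_x t y) (at y)" for y
      using t by (intro DERIV_minus Phi_dx) auto
    show "((\<lambda>y. - \<Phi>_x t y) has_real_derivative - \<Phi>_xx t x) (at x)"
      by (intro DERIV_minus Phi_dxx[OF t])
    show "- \<Phi> t (x + h) + - \<Phi> t (x - h) - 2 * - \<Phi> t x \<le> 0 * h^2" for h
      using Phi_midpoint_convex[of t x h] t by simp
  qed simp
  then show ?thesis by simp
qed

lemma Phi_xx_le: "t \<in> {0..<T} \<Longrightarrow> \<Phi>_xx t x \<le> (1 / (r * \<sigma>^2) + 2 / \<sigma>^4) * \<Phi> t x"
proof -
  assume t: "t \<in> {0..<T}"
  show ?thesis
  proof (rule second_derivative_le_of_second_difference[OF _ Phi_dxx[OF t]])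
    show "(\<Phi> t has_real_derivative \<Phi>_x t y) (at y)" for y
      using t by (intro Phi_dx) auto
    show "0 < \<sigma>^2" using \<sigma> by simp
    show "\<Phi> t (x + h) + \<Phi> t (x - h) - 2 * \<Phi> t x \<le> (1 / (r * \<sigma>^2) + 2 / \<sigma>^4) * \<Phi> t x * h^2"
      if "\<bar>h\<bar> < \<sigma>^2" for h
    proof -
      define K where "K = 1 / (r * \<sigma>^2) + 2 / \<sigma>^4"
      have "\<Phi> t (x + h) + \<Phi> t (x - h) \<le> (2 + K * h^2) * \<Phi> t x"
        using Phi_second_difference_le[of t h x] t that by (simp add: K_def)
      moreover have "(2 + K * h^2) * \<Phi> t x = 2 * \<Phi> t x + K * \<Phi> t x * h^2"
        by (simp add: algebra_simps)
      ultimately show ?thesis unfolding K_def[symmetric] by linarith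
    qed
  qed
qed

text \<open>In \<open>\<Phi>\<^sub>x\<^sub>x = (\<theta>\<^sup>2 / \<sigma>\<^sup>4 - \<theta>\<^sub>x / \<sigma>\<^sup>2) \<Phi>\<close> the two bounds on \<open>\<Phi>\<^sub>x\<^sub>x\<close> and \<open>\<bar>\<theta>\<bar> \<le> 1\<close> give
  \<open>\<theta>\<^sub>x \<le> 1 / \<sigma>\<^sup>2\<close> and \<open>- \<theta>\<^sub>x \<le> 1 / r + 2 / \<sigma>\<^sup>2\<close>; then \<open>\<sigma> < 1\<close> absorbs \<open>1 / r\<close>.\<close>
lemma abs_theta_x_le: "t \<in> {0..<T} \<Longrightarrow> \<bar>\<theta>_x t x\<bar> \<le> (2 + 1 / r) / \<sigma>^2"
proof -
  assume t: "t \<in> {0..<T}"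
  define s where "s = \<sigma>^2"
  have s: "0 < s" "s \<le> 1" using \<sigma> by (simp_all add: s_def power_le_one)
  have \<theta>2: "(\<theta> t x)^2 \<le> 1"
    using abs_theta_le_1[of t x] t by (simp add: abs_square_le_1)
  have lower: "0 \<le> (\<theta> t x)^2 / s^2 - \<theta>_x t x / s"
    using Phi_xx_nonneg[OF t, of x] Phi_pos[of t x]
    by (simp add: \<Phi>_xx_def s_def zero_le_mult_iff power_mult flip: power_add)
  have upper: "(\<theta> t x)^2 / s^2 - \<theta>_x t x / s \<le> 1 / (r * s) + 2 / s^2"
    using Phi_xx_le[OF t, of x] Phi_pos[of t x]
    by (simp add: \<Phi>_xx_def s_def power_mult flip: power_add)
  have "(\<theta> t x)^2 / s^2 \<le> 1 / s^2" using \<theta>2 s by (simp add: divide_right_mono)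
  then have "\<theta>_x t x / s \<le> 1 / s / s"
    using lower by (simp add: power2_eq_square)
  from mult_right_mono[OF this, of s] have "\<theta>_x t x \<le> 1 / s"
    using s by simp
  moreover have "- \<theta>_x t x \<le> 1 / r + 2 / s"
  proof -
    have "((\<theta> t x)^2 / s^2 - \<theta>_x t x / s) * s \<le> (1 / (r * s) + 2 / s^2) * s"
      using upper s by (intro mult_right_mono) auto
    moreover have "((\<theta> t x)^2 / s^2 - \<theta>_x t x / s) * s = (\<theta> t x)^2 / s - \<theta>_x t x"
      using s by (simp add: field_simps power2_eq_square)
    moreover have "(1 / (r * s) + 2 / s^2) * s = 1 / r + 2 / s"
      using s r_pos by (simp add: field_simps power2_eq_square)
    moreover have "0 \<le> (\<theta> t x)^2 / s" using s by simp
    ultimately show ?thesis by linarith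
  qed
  moreover have "(2 + 1 / r) / s = 2 / s + 1 / r / s" by (simp add: add_divide_distrib)
  moreover have "1 / r \<le> 1 / r / s" "1 / s \<le> 2 / s" "0 \<le> 1 / r / s"
    using r_pos s by (simp_all add: field_simps)
  ultimately show ?thesis
    unfolding abs_le_iff s_def[symmetric] by linarith
qed

end

lemma burgers_solution_of_classical_sol:
  assumes "0 < T" "0 < \<delta>" "\<delta> < T" "riccati_sol T \<kappa> \<eta>" "0 < \<sigma>" "\<sigma> < 1"
    and "classical_sol T \<kappa> \<eta> \<delta> \<sigma> \<theta>"
  obtains \<theta>_t \<theta>_x \<theta>_xx B where "burgers_solution T \<kappa> \<delta> \<sigma> \<eta> \<theta> \<theta>_t \<theta>_x \<theta>_xx B"
proof -
  from assms(7) obtain \<theta>_t \<theta>_x \<theta>_xx B where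
    derivatives: "\<forall>t\<in>{0..<T}. \<forall>x.
        ((\<lambda>s. \<theta> s x) has_real_derivative \<theta>_t t x) (at t within {0..<T})
      \<and> ((\<lambda>y. \<theta> t y) has_real_derivative \<theta>_x t x) (at x)
      \<and> ((\<lambda>y. \<theta>_x t y) has_real_derivative \<theta>_xx t x) (at x)
      \<and> \<theta>_t t x - (1 / (wfun T \<kappa> \<eta> t)^2) * \<theta> t x * \<theta>_x t x
          + 1/2 * \<sigma>^2 * (1 / (wfun T \<kappa> \<eta> t)^2) * \<theta>_xx t x = 0"
    and continuity: "continuous_on ({0..<T} \<times> UNIV) (\<lambda>(t, x). \<theta>_t t x)"
      "continuous_on ({0..<T} \<times> UNIV) (\<lambda>(t, x). \<theta>_x t x)"
      "continuous_on ({0..T} \<times> UNIV) (\<lambda>(t, x). \<theta> t x)"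
    and bounded: "\<forall>t\<in>{0..T}. \<forall>x. \<bar>\<theta> t x\<bar> \<le> B"
    and terminal: "\<forall>x. \<theta> T x = gfun T \<kappa> \<eta> \<delta> x"
    unfolding classical_sol_def by blast
  have "burgers_solution T \<kappa> \<delta> \<sigma> \<eta> \<theta> \<theta>_t \<theta>_x \<theta>_xx B"
    by unfold_locales (use assms(1-6) derivatives continuity bounded terminal in simp_all)
  then show ?thesis by (rule that)
qed

theorem mainTheorem4:
  fixes T \<kappa> \<delta> :: real and \<eta> :: "real \<Rightarrow> real"
  assumes "T > 0" and "0 < \<delta>" and "\<delta> < T"
    and "riccati_sol T \<kappa> \<eta>"
  shows "\<exists>C. \<forall>\<sigma>\<^sub>0 \<theta>. 0 < \<sigma>\<^sub>0 \<and> \<sigma>\<^sub>0 < 1 \<and> classical_sol T \<kappa> \<eta> \<delta> \<sigma>\<^sub>0 \<theta> \<longrightarrow>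
           (\<forall>t\<in>{0..<T}. \<forall>x. \<bar>deriv (\<lambda>y. \<theta> t y) x\<bar> \<le> C / \<sigma>\<^sub>0^2)"
proof (intro exI[of _ "2 + 1 / rfun T \<kappa> \<eta> \<delta>"] allI impI ballI)
  fix \<sigma>\<^sub>0 :: real and \<theta> :: "real \<Rightarrow> real \<Rightarrow> real" and t x :: real
  assume sol: "0 < \<sigma>\<^sub>0 \<and> \<sigma>\<^sub>0 < 1 \<and> classical_sol T \<kappa> \<eta> \<delta> \<sigma>\<^sub>0 \<theta>" and t: "t \<in> {0..<T}"
  obtain \<theta>_t \<theta>_x \<theta>_xx B where "burgers_solution T \<kappa> \<delta> \<sigma>\<^sub>0 \<eta> \<theta> \<theta>_t \<theta>_x \<theta>_xx B"
    using burgers_solution_of_classical_sol[OF assms] sol by blast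
  then interpret burgers_solution T \<kappa> \<delta> \<sigma>\<^sub>0 \<eta> \<theta> \<theta>_t \<theta>_x \<theta>_xx B .
  have "deriv (\<theta> t) x = \<theta>_x t x" by (rule DERIV_imp_deriv[OF \<theta>_x[OF t]])
  then show "\<bar>deriv (\<lambda>y. \<theta> t y) x\<bar> \<le> (2 + 1 / rfun T \<kappa> \<eta> \<delta>) / \<sigma>\<^sub>0^2"
    using abs_theta_x_le[OF t, of x] by (simp add: r_def)
qed

end
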